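(* Let $\alpha_{\mathrm{fail}},\alpha_{\mathrm{succ}},\alpha_{\mathrm{ch}}>0$ be arbitrary and $\mathrm{3RR}=\textsc{RoundRobin}(\mathrm{ALG}_{\mathrm{fail}},\mathrm{ALG}_{\mathrm{succ}},\mathrm{ALG}_{\mathrm{ch}};\alpha_{\mathrm{fail}},\alpha_{\mathrm{succ}},\alpha_{\mathrm{ch}})$, run on an SSC instance $I$. Then for every realization $x$ and every $h\in\{\mathrm{fail},\mathrm{succ},\mathrm{ch}\}$, $$\frac1{\alpha_h}\sum_{\tau=1}^{\tau_1}\mathrm{cost}^{\mathrm{3RR}}_\tau(\mathrm{ALG}_h,I)\le\frac1{\alpha_{\mathrm{ch}}}\,\mathrm{cost}(\mathrm{OPT},I).$$
   Context: An instance $I$ of Stochastic Score Classification (SSC) consists of tests $N=\{1,\dots,n\}$, costs $c_j\ge 0$, success probabilities $p_j\in(0,1)$, and integers $0=t_1<t_2<\dots<t_B<t_{B+1}=n+1$. The outcome vector $x\in\{0,1\}^N$ has independent coordinates with $\Pr[x_j=1]=p_j$ (test $j$ succeeds iff $x_j=1$, otherwise it fails). The score $f(x)$ is the unique $i\in\{1,\dots,B\}$ with $t_i\le\|x\|_1\le t_{i+1}-1$. A (possibly adaptive) strategy conducts tests one at a time, each at most once, the choice of the next test possibly depending on outcomes observed so far, and stops as soon as $f(x)$ is determined (i.e., all $x'\in\{0,1\}^N$ agreeing with $x$ on the conducted tests have $f(x')=f(x)$). $\mathrm{cost}(S,I)$ is the random total cost of the tests conducted by strategy $S$ on $I$. $\mathrm{OPT}$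 is a fixed strategy minimizing $\mathbb{E}[\mathrm{cost}(S,I)]$ over all adaptive strategies $S$. Let $\sigma_{\mathrm{fail}},\sigma_{\mathrm{succ}},\sigma_{\mathrm{ch}}$ be permutations of $N$ (ties broken arbitrarily) such that $c_{\sigma_{\mathrm{fail}}(1)}/(1-p_{\sigma_{\mathrm{fail}}(1)})\le\dots\le c_{\sigma_{\mathrm{fail}}(n)}/(1-p_{\sigma_{\mathrm{fail}}(n)})$, $c_{\sigma_{\mathrm{succ}}(1)}/p_{\sigma_{\mathrm{succ}}(1)}\le\dots\le c_{\sigma_{\mathrm{succ}}(n)}/p_{\sigma_{\mathrm{succ}}(n)}$, and $c_{\sigma_{\mathrm{ch}}(1)}\le\dots\le c_{\sigma_{\mathrm{ch}}(n)}$. $\mathrm{ALG}_{\mathrm{fail}},\mathrm{ALG}_{\mathrm{succ}},\mathrm{ALG}_{\mathrm{ch}}$ denote the orders of tests given by $\sigma_{\mathrm{fail}},\sigma_{\mathrm{succ}},\sigma_{\mathrm{ch}}$ respectively. $\textsc{RoundRobin}(\mathrm{ALG}_1,\dots,\mathrm{ALG}_k;\alpha_1,\dots,\alpha_k)$, for fixed orders $\mathrm{ALG}_h$ of $N$ and weights $\alpha_h>0$: initialize $C_h=0$ for all $h$; while $f(x)$ is not determined, for each $h$ let $\delta_h$ be the cost of the first test in the order $\mathrm{ALG}_h$ that has not yet been conducted by the scheme, choose $h^\star\in\arg\min_h (C_h+\delta_h)/\alpha_h$ (ties arbitrary), conduct that test of $\mathrm{ALG}_{h^\star}$, and set $C_{h^\star}\leftarrow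 C_{h^\star}+\delta_{h^\star}$. Each loop iteration is a step; for a round-robin algorithm $\mathrm{RR}$ and step $\tau$ (before termination), $\mathrm{cost}^{\mathrm{RR}}_\tau(\mathrm{ALG}_h,I)$ equals the cost of the test conducted in step $\tau$ if $h=h^\star$ in that step, and $0$ otherwise. For a realization $x$ with $i=f(x)$, $\tau_1$ is the smallest integer $\tau\ge 0$ such that among the tests conducted by $\mathrm{3RR}$ in steps $1,\dots,\tau$ at least $t_i$ succeeded or at least $n+1-t_{i+1}$ failed. *)

theory Defs
  imports Complex_Main
begin

(* Tests are indexed by {0..<n} (the paper's N = {1..n}, shifted by one).
   A realization is x :: nat => bool (test j succeeds iff x j); only its values on
   {0..<n} matter. Thresholds t 1, ..., t (B+1) are given by t :: nat => nat. *)

definition num_succ :: "nat \<Rightarrow> (nat \<Rightarrow> bool) \<Rightarrow> nat" where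
  "num_succ n x = card {j\<in>{0..<n}. x j}"

definition score :: "nat \<Rightarrow> (nat \<Rightarrow> nat) \<Rightarrow> nat \<Rightarrow> (nat \<Rightarrow> bool) \<Rightarrow> nat" where
  "score n t B x = (THE i. 1 \<le> i \<and> i \<le> B \<and> t i \<le> num_succ n x \<and> num_succ n x \<le> t (Suc i) - 1)"

definition determined :: "nat \<Rightarrow> (nat \<Rightarrow> nat) \<Rightarrow> nat \<Rightarrow> nat set \<Rightarrow> (nat \<Rightarrow> bool) \<Rightarrow> bool" where
  "determined n t B D x = (\<forall>x'. (\<forall>j\<in>D. x' j = x j) \<longrightarrow> score n t B x' = score n t B x)"

datatype strategy = Stop | Test nat strategy strategy

fun run :: "strategy \<Rightarrow> (nat \<Rightarrow> bool) \<Rightarrow> nat list" where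
  "run Stop x = []"
| "run (Test j s0 s1) x = j # run (if x j then s1 else s0) x"

definition valid_strategy :: "nat \<Rightarrow> (nat \<Rightarrow> nat) \<Rightarrow> nat \<Rightarrow> strategy \<Rightarrow> bool" where
  "valid_strategy n t B S =
    (\<forall>x. distinct (run S x) \<and> set (run S x) \<subseteq> {0..<n}
         \<and> determined n t B (set (run S x)) x
         \<and> (\<forall>k<length (run S x). \<not> determined n t B (set (take k (run S x))) x))"

definition strat_cost :: "(nat \<Rightarrow> real) \<Rightarrow> strategy \<Rightarrow> (nat \<Rightarrow> bool) \<Rightarrow> real" where
  "strat_cost c S x = sum_list (map c (run S x))"

definition real_prob :: "nat \<Rightarrow> (nat \<Rightarrow> real) \<Rightarrow> nat set \<Rightarrow> real" where
  "real_prob n p A = (\<Prod>j\<in>A. p j) * (\<Prod>j\<in>{0..<n} - A. 1 - p j)"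

definition exp_cost :: "nat \<Rightarrow> (nat \<Rightarrow> real) \<Rightarrow> (nat \<Rightarrow> real) \<Rightarrow> strategy \<Rightarrow> real" where
  "exp_cost n c p S = (\<Sum>A\<in>Pow {0..<n}. real_prob n p A * strat_cost c S (\<lambda>j. j \<in> A))"

definition is_OPT :: "nat \<Rightarrow> (nat \<Rightarrow> real) \<Rightarrow> (nat \<Rightarrow> real) \<Rightarrow> (nat \<Rightarrow> nat) \<Rightarrow> nat \<Rightarrow> strategy \<Rightarrow> bool" where
  "is_OPT n c p t B S = (valid_strategy n t B S \<and>
     (\<forall>S'. valid_strategy n t B S' \<longrightarrow> exp_cost n c p S \<le> exp_cost n c p S'))"

definition is_test_order :: "nat \<Rightarrow> (nat \<Rightarrow> real) \<Rightarrow> nat list \<Rightarrow> bool" where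
  "is_test_order n key L = (distinct L \<and> set L = {0..<n} \<and> sorted (map key L))"

(* Round robin. ords = list of orders ALG_h, alphas = list of weights alpha_h.
   A run is described by the list hs of chosen indices h* in steps 1,2,...;
   the state (D, C) consists of the list of tests conducted so far and the counters C_h. *)
definition next_test :: "nat list \<Rightarrow> nat list \<Rightarrow> nat" where
  "next_test L D = hd (filter (\<lambda>j. j \<notin> set D) L)"

definition delta :: "nat list list \<Rightarrow> (nat \<Rightarrow> real) \<Rightarrow> nat list \<Rightarrow> nat \<Rightarrow> real" where
  "delta ords c D h = c (next_test (ords ! h) D)"

definition rr_step :: "nat list list \<Rightarrow> (nat \<Rightarrow> real) \<Rightarrow> nat list \<times> (nat \<Rightarrow> real) \<Rightarrow> nat \<Rightarrow> nat list \<times> (nat \<Rightarrow> real)" where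
  "rr_step ords c st h =
     (let j = next_test (ords ! h) (fst st)
      in (fst st @ [j], (snd st)(h := snd st h + c j)))"

definition rr_state :: "nat list list \<Rightarrow> (nat \<Rightarrow> real) \<Rightarrow> nat list \<Rightarrow> nat list \<times> (nat \<Rightarrow> real)" where
  "rr_state ords c hs = foldl (rr_step ords c) ([], (\<lambda>_. 0)) hs"

definition valid_rr_run :: "nat \<Rightarrow> (nat \<Rightarrow> nat) \<Rightarrow> nat \<Rightarrow> (nat \<Rightarrow> real) \<Rightarrow> nat list list \<Rightarrow> real list
     \<Rightarrow> (nat \<Rightarrow> bool) \<Rightarrow> nat list \<Rightarrow> bool" where
  "valid_rr_run n t B c ords alphas x hs =
     ((\<forall>\<tau><length hs.
         \<not> determined n t B (set (fst (rr_state ords c (take \<tau> hs)))) x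
       \<and> hs ! \<tau> < length ords
       \<and> (\<forall>h'<length ords.
            (snd (rr_state ords c (take \<tau> hs)) (hs ! \<tau>) + delta ords c (fst (rr_state ords c (take \<tau> hs))) (hs ! \<tau>)) / (alphas ! (hs ! \<tau>))
            \<le> (snd (rr_state ords c (take \<tau> hs)) h' + delta ords c (fst (rr_state ords c (take \<tau> hs))) h') / (alphas ! h')))
      \<and> determined n t B (set (fst (rr_state ords c hs))) x)"

(* cost^RR_tau(ALG_h, I), for step tau >= 1 *)
definition rr_step_cost :: "nat list list \<Rightarrow> (nat \<Rightarrow> real) \<Rightarrow> nat list \<Rightarrow> nat \<Rightarrow> nat \<Rightarrow> real" where
  "rr_step_cost ords c hs h \<tau> =
     (if hs ! (\<tau> - 1) = h then c (fst (rr_state ords c hs) ! (\<tau> - 1)) else 0)"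

definition tau1 :: "nat \<Rightarrow> (nat \<Rightarrow> nat) \<Rightarrow> nat \<Rightarrow> (nat \<Rightarrow> bool) \<Rightarrow> nat list \<Rightarrow> nat" where
  "tau1 n t B x D =
     (LEAST \<tau>. t (score n t B x) \<le> card {j \<in> set (take \<tau> D). x j}
             \<or> n + 1 - t (Suc (score n t B x)) \<le> card {j \<in> set (take \<tau> D). \<not> x j})"

end

theory Submission
  imports Defs
begin

text \<open>Let \<open>R\<close> be the set of tests OPT conducts on \<open>x\<close>. Since \<open>R\<close> determines the score \<open>i\<close>, it
  contains at least \<open>t\<^sub>i\<close> successes and \<open>n + 1 - t\<^sub>i\<^sub>+\<^sub>1\<close> failures, while before step
  \<open>\<tau>\<^sub>1\<close> the round robin has seen fewer of each; hence it has conducted fewer than \<open>|R|\<close> tests.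
  The tests charged to the cheapest-first order, together with its next test, are then at most
  \<open>|R|\<close> tests, none dearer than any cheapest untested one, so an exchange argument bounds their
  cost by \<open>c(R)\<close>. Finally, whenever the round robin serves order \<open>h\<close>, its choice rule bounds the new
  value of \<open>C\<^sub>h / \<alpha>\<^sub>h\<close> by this quantity divided by \<open>\<alpha>\<^sub>c\<^sub>h\<close>.\<close>

lemma thresholds_less:
  fixes t :: "nat \<Rightarrow> nat"
  assumes t_incr: "\<forall>i\<in>{1..B}. t i < t (Suc i)" and "1 \<le> i" "i < i'" "i' \<le> B + 1"
  shows "t i < t i'"
proof -
  have "Suc i \<le> i'" using assms(3) by simp
  then show ?thesis using assms(4)
  proof (induction i' rule: dec_induct)
    case base
    then show ?case using t_incr assms(2) by simp
  next
    case (step k)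
    then have "t k < t (Suc k)" using t_incr assms(2) by simp
    with step show ?case by simp
  qed
qed

lemma thresholds_le:
  fixes t :: "nat \<Rightarrow> nat"
  assumes "\<forall>i\<in>{1..B}. t i < t (Suc i)" and "1 \<le> i" "i \<le> i'" "i' \<le> B + 1"
  shows "t i \<le> t i'"
  using thresholds_less[OF assms(1,2), of i'] assms(3,4) by (cases "i = i'") auto

lemma num_succ_le: "num_succ n x \<le> n"
  unfolding num_succ_def by (rule le_trans[OF card_mono[of "{0..<n}"]]) auto

lemma score_interval_ex1:
  fixes t :: "nat \<Rightarrow> nat"
  assumes t_first: "t 1 = 0" and t_last: "t (B + 1) = n + 1"
    and t_incr: "\<forall>i\<in>{1..B}. t i < t (Suc i)" and m: "m \<le> n"
  shows "\<exists>!i. 1 \<le> i \<and> i \<le> B \<and> t i \<le> m \<and> m \<le> t (Suc i) - 1"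
proof (rule ex_ex1I)
  have "B \<noteq> 0"
  proof
    assume "B = 0"
    with t_first t_last show False by simp
  qed
  define A where "A = {i\<in>{1..B}. t i \<le> m}"
  define M where "M = Max A"
  have "finite A" by (simp add: A_def)
  have "1 \<in> A" using \<open>B \<noteq> 0\<close> t_first by (simp add: A_def)
  then have "M \<in> A" unfolding M_def using \<open>finite A\<close> by (intro Max_in) auto
  moreover have "m < t (Suc M)"
  proof (cases "M < B")
    case True
    have "Suc M \<notin> A" using Max_ge[OF \<open>finite A\<close>, of "Suc M"] by (auto simp: M_def)
    then show ?thesis using True by (simp add: A_def)
  next
    case False
    then show ?thesis using \<open>M \<in> A\<close> t_last m by (simp add: A_def)
  qed
  ultimately show "\<exists>i. 1 \<le> i \<and> i \<le> B \<and> t i \<le> m \<and> m \<le> t (Suc i) - 1"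
    by (auto simp: A_def)
next
  fix i i'
  assume i: "1 \<le> i \<and> i \<le> B \<and> t i \<le> m \<and> m \<le> t (Suc i) - 1"
    and i': "1 \<le> i' \<and> i' \<le> B \<and> t i' \<le> m \<and> m \<le> t (Suc i') - 1"
  have "t i < t (Suc i)" "t i' < t (Suc i')" using t_incr i i' by auto
  then have below: "m < t (Suc i)" "m < t (Suc i')" using i i' by arith+
  have "\<not> i < i'"
  proof
    assume "i < i'"
    then have "t (Suc i) \<le> t i'" using thresholds_le[OF t_incr, of "Suc i" i'] i' by simp
    with below i' show False by simp
  qed
  moreover have "\<not> i' < i"
  proof
    assume "i' < i"
    then have "t (Suc i') \<le> t i" using thresholds_le[OF t_incr, of "Suc i'" i] i by simp
    with below i show False by simp
  qed
  ultimately show "i = i'" by simp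
qed

lemma score_in_interval:
  assumes "t 1 = 0" "t (B + 1) = n + 1" "\<forall>i\<in>{1..B}. t i < t (Suc i)"
  shows "1 \<le> score n t B x \<and> score n t B x \<le> B \<and> t (score n t B x) \<le> num_succ n x
         \<and> num_succ n x \<le> t (Suc (score n t B x)) - 1"
  unfolding score_def by (rule theI') (rule score_interval_ex1[OF assms num_succ_le])

lemma card_succ_plus_card_fail:
  "finite S \<Longrightarrow> card {j\<in>S. x j} + card {j\<in>S. \<not> x j} = card S"
  by (subst card_Un_disjoint[symmetric]) (auto intro: arg_cong[where f = card])

text \<open>Completing the untested outcomes by all failures, resp. all successes, does not change the
  score of a determined realization; the two completions give the two counting bounds.\<close>

lemma determined_imp_counts:
  assumes t_first: "t 1 = 0" and t_last: "t (B + 1) = n + 1" and t_incr: "\<forall>i\<in>{1..B}. t i < t (Suc i)"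
    and D: "D \<subseteq> {0..<n}" and det: "determined n t B D x"
  shows "t (score n t B x) \<le> card {j\<in>D. x j}
    \<and> n + 1 - t (Suc (score n t B x)) \<le> card {j\<in>D. \<not> x j}"
proof -
  define s where "s = score n t B x"
  define x0 where "x0 = (\<lambda>j. j \<in> D \<and> x j)"
  define x1 where "x1 = (\<lambda>j. j \<notin> D \<or> x j)"
  note interval = score_in_interval[OF t_first t_last t_incr]
  have finD: "finite D" using D finite_subset by blast
  have "\<forall>j\<in>D. x0 j = x j" "\<forall>j\<in>D. x1 j = x j" by (simp_all add: x0_def x1_def)
  then have "score n t B x0 = s" "score n t B x1 = s"
    using det unfolding determined_def s_def by blast+
  then have lower: "t s \<le> num_succ n x0" and upper: "num_succ n x1 \<le> t (Suc s) - 1"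
    and s: "1 \<le> s" "s \<le> B"
    using interval[of x0] interval[of x1] by auto
  have "{j\<in>{0..<n}. x0 j} = {j\<in>D. x j}" using D by (auto simp: x0_def)
  then have n0: "num_succ n x0 = card {j\<in>D. x j}" by (simp add: num_succ_def)
  have "{j\<in>{0..<n}. x1 j} = {j\<in>D. x j} \<union> ({0..<n} - D)" using D by (auto simp: x1_def)
  then have "num_succ n x1 = card ({j\<in>D. x j} \<union> ({0..<n} - D))" by (simp add: num_succ_def)
  also have "\<dots> = card {j\<in>D. x j} + card ({0..<n} - D)" using finD by (intro card_Un_disjoint) auto
  also have "card ({0..<n} - D) = n - card D" using D finD by (simp add: card_Diff_subset)
  finally have n1: "num_succ n x1 = card {j\<in>D. x j} + (n - card D)" .
  have "card D \<le> n" using D card_mono[of "{0..<n}" D] by simp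
  moreover have "t s < t (Suc s)" using t_incr s by auto
  moreover note card_succ_plus_card_fail[OF finD, of x]
  ultimately have "n + 1 - t (Suc s) \<le> card {j\<in>D. \<not> x j}" using upper n1 by arith
  with lower n0 show ?thesis unfolding s_def[symmetric] by simp
qed

lemma determined_if_all_tested:
  assumes "{0..<n} \<subseteq> D"
  shows "determined n t B D x"
  unfolding determined_def
proof (intro allI impI)
  fix x' assume "\<forall>j\<in>D. x' j = x j"
  then have "{j\<in>{0..<n}. x' j} = {j\<in>{0..<n}. x j}" using assms by auto
  then show "score n t B x' = score n t B x" by (simp add: score_def num_succ_def)
qed

lemma tau1_le_length:
  assumes "t 1 = 0" "t (B + 1) = n + 1" "\<forall>i\<in>{1..B}. t i < t (Suc i)"
    and "set D \<subseteq> {0..<n}" "determined n t B (set D) x"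
  shows "tau1 n t B x D \<le> length D"
  unfolding tau1_def by (rule Least_le) (use determined_imp_counts[OF assms] in simp)

lemma card_tested_less_before_tau1:
  assumes t: "t 1 = 0" "t (B + 1) = n + 1" "\<forall>i\<in>{1..B}. t i < t (Suc i)"
    and R: "R \<subseteq> {0..<n}" "determined n t B R x"
    and \<tau>: "\<tau> < tau1 n t B x D"
  shows "card (set (take \<tau> D)) < card R"
proof -
  have "finite R" using R(1) finite_subset by blast
  have "\<not> (t (score n t B x) \<le> card {j \<in> set (take \<tau> D). x j}
          \<or> n + 1 - t (Suc (score n t B x)) \<le> card {j \<in> set (take \<tau> D). \<not> x j})"
    using not_less_Least[OF \<tau>[unfolded tau1_def]] .
  then show ?thesis
    using determined_imp_counts[OF t R] card_succ_plus_card_fail[OF \<open>finite R\<close>, of x]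
      card_succ_plus_card_fail[of "set (take \<tau> D)" x] by simp
qed

lemma next_test_mem:
  assumes "y \<in> set L" "y \<notin> set D"
  shows "next_test L D \<in> set L" "next_test L D \<notin> set D"
proof -
  have "filter (\<lambda>j. j \<notin> set D) L \<noteq> []" using assms by (auto simp: filter_empty_conv)
  then have "next_test L D \<in> set (filter (\<lambda>j. j \<notin> set D) L)"
    unfolding next_test_def by (rule hd_in_set)
  then show "next_test L D \<in> set L" "next_test L D \<notin> set D" by simp_all
qed

lemma next_test_minimal:
  assumes "sorted (map c L)" "y \<in> set L" "y \<notin> set D"
  shows "c (next_test L D) \<le> c y"
proof -
  have sorted: "sorted (map c (filter (\<lambda>j. j \<notin> set D) L))" using assms(1) by (rule sorted_filter)
  have y: "y \<in> set (filter (\<lambda>j. j \<notin> set D) L)" using assms(2,3) by simp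
  then obtain a r where "filter (\<lambda>j. j \<notin> set D) L = a # r"
    by (cases "filter (\<lambda>j. j \<notin> set D) L") auto
  with sorted y show ?thesis by (auto simp: next_test_def)
qed

lemma sum_le_sum_if_separated:
  fixes f :: "'a \<Rightarrow> 'b::linordered_semidom"
  assumes "finite U" "finite R" "card U \<le> card R"
    and "\<forall>u\<in>U. f u \<le> v" "\<forall>r\<in>R - U. v \<le> f r" "0 \<le> v"
  shows "sum f U \<le> sum f R"
proof -
  have card: "card (U - R) \<le> card (R - U)"
    using assms(1-3) card_Int_Diff[of U R] card_Int_Diff[of R U] by (simp add: Int_commute)
  have "sum f (U - R) \<le> of_nat (card (U - R)) * v"
    using assms(4) by (intro sum_bounded_above) auto
  also have "\<dots> \<le> of_nat (card (R - U)) * v"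
    using card assms(6) by (intro mult_right_mono) simp_all
  also have "\<dots> \<le> sum f (R - U)"
    using assms(5) by (intro sum_bounded_below) auto
  finally show ?thesis
    using sum.Int_Diff[OF assms(1), of f R] sum.Int_Diff[OF assms(2), of f U] by (simp add: Int_commute)
qed

text \<open>Exchange argument for the cheapest-first order: the next test together with any tests that
  were each the cheapest untested test at the time they were chosen form at most \<open>|D| + 1\<close> tests
  no more expensive than the next one, while every cheaper test is already in \<open>D\<close>.\<close>

lemma cheapest_next_plus_chosen_le:
  fixes c :: "nat \<Rightarrow> real"
  assumes sorted: "sorted (map c L)" and c_nonneg: "\<forall>j\<in>set L. 0 \<le> c j"
    and R: "R \<subseteq> set L" and card_D: "card (set D) < card R"
    and S: "S \<subseteq> set D" and chosen_cheapest: "\<forall>s\<in>S. \<forall>z\<in>set L - set D. c s \<le> c z"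
  shows "c (next_test L D) + sum c S \<le> sum c R"
proof -
  define j where "j = next_test L D"
  obtain y where y: "y \<in> set L" "y \<notin> set D"
  proof (rule ccontr)
    assume "\<not> thesis"
    then have "set L \<subseteq> set D" using that by blast
    then have "card R \<le> card (set D)" using card_mono[OF _ R] card_mono[of "set D" "set L"] by simp
    with card_D show False by simp
  qed
  have j: "j \<in> set L" "j \<notin> set D" using next_test_mem[OF y] by (simp_all add: j_def)
  have cheaper_tested: "{z \<in> set L. c z < c j} \<subseteq> set D"
  proof
    fix z assume z: "z \<in> {z \<in> set L. c z < c j}"
    show "z \<in> set D"
    proof (rule ccontr)
      assume "z \<notin> set D"
      with z have "c j \<le> c z" using next_test_minimal[OF sorted] by (simp add: j_def)
      with z show False by simp
    qed
  qed
  define U where "U = insert j (S \<union> {z \<in> set L. c z < c j})"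
  have U: "U \<subseteq> insert j (set D)" using S cheaper_tested by (auto simp: U_def)
  have "sum c U \<le> sum c R"
  proof (rule sum_le_sum_if_separated[where v = "c j"])
    show "card U \<le> card R" using card_D card_mono[OF _ U] j(2) by simp
    show "finite U" using finite_subset[OF U] by simp
    show "finite R" using finite_subset[OF R] by simp
    show "\<forall>u\<in>U. c u \<le> c j" using chosen_cheapest j by (auto simp: U_def)
    show "\<forall>r\<in>R - U. c j \<le> c r" using R by (force simp: U_def)
    show "0 \<le> c j" using c_nonneg j(1) by simp
  qed
  moreover have "sum c (insert j S) \<le> sum c U"
    using finite_subset[OF U] U j S c_nonneg
    by (intro sum_mono2) (auto simp: U_def dest!: subsetD)
  moreover have "sum c (insert j S) = c j + sum c S"
    using S j(2) finite_subset[OF S] by (subst sum.insert) auto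
  ultimately show ?thesis unfolding j_def by simp
qed

abbreviation rr_tests :: "nat list list \<Rightarrow> (nat \<Rightarrow> real) \<Rightarrow> nat list \<Rightarrow> nat list" where
  "rr_tests ords c hs \<equiv> fst (rr_state ords c hs)"

abbreviation rr_counter :: "nat list list \<Rightarrow> (nat \<Rightarrow> real) \<Rightarrow> nat list \<Rightarrow> nat \<Rightarrow> real" where
  "rr_counter ords c hs \<equiv> snd (rr_state ords c hs)"

lemma rr_state_Nil: "rr_state ords c [] = ([], \<lambda>_. 0)"
  by (simp add: rr_state_def)

lemma rr_state_snoc: "rr_state ords c (hs @ [h]) = rr_step ords c (rr_state ords c hs) h"
  by (simp add: rr_state_def)

lemma rr_tests_snoc:
  "rr_tests ords c (hs @ [h]) = rr_tests ords c hs @ [next_test (ords ! h) (rr_tests ords c hs)]"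
  by (simp add: rr_state_snoc rr_step_def Let_def)

lemma rr_counter_snoc:
  "rr_counter ords c (hs @ [h]) h'
     = rr_counter ords c hs h' + (if h = h' then delta ords c (rr_tests ords c hs) h else 0)"
  by (simp add: rr_state_snoc rr_step_def Let_def delta_def)

lemma length_rr_tests: "length (rr_tests ords c hs) = length hs"
  by (induction hs rule: rev_induct) (simp_all add: rr_state_Nil rr_tests_snoc)

lemma rr_tests_take: "rr_tests ords c (take k hs) = take k (rr_tests ords c hs)"
proof (induction hs arbitrary: k rule: rev_induct)
  case Nil
  then show ?case by (simp add: rr_state_Nil)
next
  case (snoc h hs)
  then show ?case
    by (cases "k \<le> length hs") (simp_all add: rr_tests_snoc length_rr_tests)
qed

lemma rr_tests_nth:
  "k < length hs \<Longrightarrow> rr_tests ords c hs ! k = next_test (ords ! (hs ! k)) (take k (rr_tests ords c hs))"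
  by (metis length_rr_tests nth_append_length rr_tests_snoc rr_tests_take take_Suc_conv_app_nth)

lemma rr_counter_take_Suc:
  assumes "k < length hs"
  shows "rr_counter ords c (take (Suc k) hs) h
    = rr_counter ords c (take k hs) h + (if hs ! k = h then c (rr_tests ords c hs ! k) else 0)"
  using assms by (simp add: take_Suc_conv_app_nth rr_counter_snoc delta_def rr_tests_take rr_tests_nth)

lemma rr_counter_take_eq_sum:
  "k \<le> length hs \<Longrightarrow>
    rr_counter ords c (take k hs) h = (\<Sum>i<k. if hs ! i = h then c (rr_tests ords c hs ! i) else 0)"
  by (induction k) (simp_all add: rr_state_Nil rr_counter_take_Suc)

lemma sum_rr_step_cost:
  assumes "k \<le> length hs"
  shows "(\<Sum>\<tau>\<in>{1..k}. rr_step_cost ords c hs h \<tau>) = rr_counter ords c (take k hs) h"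
proof -
  have "rr_step_cost ords c hs h (Suc i) = (if hs ! i = h then c (rr_tests ords c hs ! i) else 0)" for i
    by (simp add: rr_step_cost_def)
  then show ?thesis
    using sum.atLeast1_atMost_eq[of "rr_step_cost ords c hs h" k, unfolded One_nat_def[symmetric]]
    by (simp add: rr_counter_take_eq_sum[OF assms])
qed

lemma valid_rr_run_tests:
  assumes run: "valid_rr_run n t B c ords alphas x hs" and ords: "\<forall>L\<in>set ords. set L = {0..<n}"
  shows "distinct (rr_tests ords c hs) \<and> set (rr_tests ords c hs) \<subseteq> {0..<n}"
proof -
  define D where "D = rr_tests ords c hs"
  have "distinct (take k D) \<and> set (take k D) \<subseteq> {0..<n}" if "k \<le> length hs" for k
    using that
  proof (induction k)
    case 0
    then show ?case by simp
  next
    case (Suc k)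
    then have k: "k < length hs" by simp
    have "\<not> determined n t B (set (take k D)) x" "hs ! k < length ords"
      using run k unfolding valid_rr_run_def D_def rr_tests_take by auto
    then obtain y where y: "y \<in> set (ords ! (hs ! k))" "y \<notin> set (take k D)"
      using determined_if_all_tested ords nth_mem by blast
    have "D ! k = next_test (ords ! (hs ! k)) (take k D)" using k by (simp add: D_def rr_tests_nth)
    then have "D ! k \<in> {0..<n}" "D ! k \<notin> set (take k D)"
      using next_test_mem[OF y] ords nth_mem[OF \<open>hs ! k < length ords\<close>] by auto
    moreover have "take (Suc k) D = take k D @ [D ! k]"
      using k by (simp add: D_def length_rr_tests take_Suc_conv_app_nth)
    ultimately show ?case using Suc by simp
  qed
  from this[of "length hs"] show ?thesis by (simp add: D_def length_rr_tests)
qed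

text \<open>The counter of a cheapest-first order is the cost of the tests it has chosen, and each of
  them was the cheapest untested test when chosen; so the exchange argument applies.\<close>

lemma rr_cheapest_counter_le:
  assumes run: "valid_rr_run n t B c ords alphas x hs" and ords: "\<forall>L\<in>set ords. set L = {0..<n}"
    and ch: "ch < length ords" and sorted: "sorted (map c (ords ! ch))"
    and c_nonneg: "\<forall>j<n. 0 \<le> c j" and R: "R \<subseteq> {0..<n}"
    and \<tau>: "\<tau> \<le> length hs" and card_tested: "card (set (take \<tau> (rr_tests ords c hs))) < card R"
  shows "rr_counter ords c (take \<tau> hs) ch + delta ords c (rr_tests ords c (take \<tau> hs)) ch \<le> sum c R"
proof -
  define D where "D = rr_tests ords c hs"
  define L where "L = ords ! ch"
  define S where "S = (\<lambda>i. D ! i) ` {i\<in>{..<\<tau>}. hs ! i = ch}"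
  have L: "set L = {0..<n}" using ords ch by (simp add: L_def)
  have D: "distinct D" "length D = length hs"
    using valid_rr_run_tests[OF run ords] by (simp_all add: D_def length_rr_tests)
  have "rr_counter ords c (take \<tau> hs) ch = (\<Sum>i<\<tau>. if hs ! i = ch then c (D ! i) else 0)"
    unfolding D_def by (rule rr_counter_take_eq_sum[OF \<tau>])
  also have "\<dots> = (\<Sum>i\<in>{i\<in>{..<\<tau>}. hs ! i = ch}. c (D ! i))"
    by (rule sum.inter_filter[symmetric]) simp
  also have "\<dots> = sum c S"
    unfolding S_def using D \<tau> by (subst sum.reindex) (auto intro!: inj_on_nth)
  finally have counter: "rr_counter ords c (take \<tau> hs) ch = sum c S" .
  have "c (next_test L (take \<tau> D)) + sum c S \<le> sum c R"
  proof (rule cheapest_next_plus_chosen_le)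
    show "sorted (map c L)" "\<forall>j\<in>set L. 0 \<le> c j" "R \<subseteq> set L"
      using sorted c_nonneg R L by (simp_all add: L_def)
    show "card (set (take \<tau> D)) < card R" using card_tested by (simp add: D_def)
    show "S \<subseteq> set (take \<tau> D)"
    proof
      fix s assume "s \<in> S"
      then obtain i where i: "i < \<tau>" "s = D ! i" by (auto simp: S_def)
      then have "i < length (take \<tau> D)" "take \<tau> D ! i = s" using D \<tau> by simp_all
      then show "s \<in> set (take \<tau> D)" by (metis nth_mem)
    qed
    show "\<forall>s\<in>S. \<forall>z\<in>set L - set (take \<tau> D). c s \<le> c z"
    proof (intro ballI)
      fix s z assume "s \<in> S" and z: "z \<in> set L - set (take \<tau> D)"
      then obtain i where i: "i < \<tau>" "hs ! i = ch" "s = D ! i" by (auto simp: S_def)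
      then have "s = next_test L (take i D)" using \<tau> by (simp add: D_def L_def rr_tests_nth)
      moreover have "z \<notin> set (take i D)" using z set_take_subset_set_take[of i \<tau> D] i(1) by auto
      ultimately show "c s \<le> c z" using next_test_minimal[OF sorted] z by (simp add: L_def)
    qed
  qed
  then show ?thesis by (simp add: counter delta_def D_def L_def rr_tests_take)
qed

lemma rr_counter_le_bound:
  assumes run: "valid_rr_run n t B c ords alphas x hs"
    and ch: "ch < length ords" "alphas ! ch > 0" and M: "0 \<le> M"
    and bound: "\<forall>\<tau><T. rr_counter ords c (take \<tau> hs) ch + delta ords c (rr_tests ords c (take \<tau> hs)) ch \<le> M"
    and T: "T \<le> length hs"
  shows "rr_counter ords c (take T hs) h / (alphas ! h) \<le> M / (alphas ! ch)"
  using T bound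
proof (induction T)
  case 0
  then show ?case using M ch(2) by (simp add: rr_state_Nil)
next
  case (Suc \<tau>)
  then have \<tau>: "\<tau> < length hs" by simp
  define st where "st = rr_state ords c (take \<tau> hs)"
  have step: "rr_counter ords c (take (Suc \<tau>) hs) h
      = snd st h + (if hs ! \<tau> = h then delta ords c (fst st) h else 0)"
    using \<tau> by (simp add: take_Suc_conv_app_nth rr_counter_snoc st_def)
  show ?case
  proof (cases "hs ! \<tau> = h")
    case False
    then show ?thesis using Suc step by (simp add: st_def)
  next
    case True
    have "(snd st h + delta ords c (fst st) h) / (alphas ! h)
        \<le> (snd st ch + delta ords c (fst st) ch) / (alphas ! ch)"
      using run \<tau> ch(1) True unfolding valid_rr_run_def st_def by blast
    also have "\<dots> \<le> M / (alphas ! ch)"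
      using Suc.prems(2) ch(2) by (simp add: st_def divide_right_mono)
    finally show ?thesis using step True by simp
  qed
qed

theorem lemma2:
  fixes n B :: nat and t :: "nat \<Rightarrow> nat" and c p :: "nat \<Rightarrow> real"
    and a_fail a_succ a_ch :: real and L_fail L_succ L_ch :: "nat list"
    and OPT :: strategy and x :: "nat \<Rightarrow> bool" and hs :: "nat list" and h :: nat
  assumes c_nonneg: "\<forall>j<n. 0 \<le> c j"
    and p_range: "\<forall>j<n. 0 < p j \<and> p j < 1"
    and t_first: "t 1 = 0"
    and t_last: "t (B + 1) = n + 1"
    and t_incr: "\<forall>i\<in>{1..B}. t i < t (Suc i)"
    and ord_fail: "is_test_order n (\<lambda>j. c j / (1 - p j)) L_fail"
    and ord_succ: "is_test_order n (\<lambda>j. c j / p j) L_succ"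
    and ord_ch: "is_test_order n c L_ch"
    and alphas_pos: "a_fail > 0" "a_succ > 0" "a_ch > 0"
    and opt: "is_OPT n c p t B OPT"
    and run3: "valid_rr_run n t B c [L_fail, L_succ, L_ch] [a_fail, a_succ, a_ch] x hs"
    and h: "h < 3"
  shows "(1 / ([a_fail, a_succ, a_ch] ! h)) *
           (\<Sum>\<tau>\<in>{1..tau1 n t B x (fst (rr_state [L_fail, L_succ, L_ch] c hs))}.
              rr_step_cost [L_fail, L_succ, L_ch] c hs h \<tau>)
         \<le> (1 / a_ch) * strat_cost c OPT x"
proof -
  let ?ords = "[L_fail, L_succ, L_ch]"
  define D where "D = rr_tests ?ords c hs"
  define T where "T = tau1 n t B x D"
  define R where "R = set (run OPT x)"
  have ords: "\<forall>L\<in>set ?ords. set L = {0..<n}"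
    using ord_fail ord_succ ord_ch by (simp add: is_test_order_def)
  have R: "distinct (run OPT x)" "R \<subseteq> {0..<n}" "determined n t B R x"
    using opt by (auto simp: is_OPT_def valid_strategy_def R_def)
  have "set D \<subseteq> {0..<n}" "determined n t B (set D) x"
    using valid_rr_run_tests[OF run3 ords] run3 by (simp_all add: D_def valid_rr_run_def)
  then have "T \<le> length D" unfolding T_def by (rule tau1_le_length[OF t_first t_last t_incr])
  then have T: "T \<le> length hs" by (simp add: D_def length_rr_tests)
  have "\<forall>\<tau><T. rr_counter ?ords c (take \<tau> hs) 2 + delta ?ords c (rr_tests ?ords c (take \<tau> hs)) 2 \<le> sum c R"
    using rr_cheapest_counter_le[OF run3 ords _ _ c_nonneg R(2)] T ord_ch
      card_tested_less_before_tau1[OF t_first t_last t_incr R(2,3)]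
    by (simp add: is_test_order_def T_def D_def)
  then have "rr_counter ?ords c (take T hs) h / ([a_fail, a_succ, a_ch] ! h) \<le> sum c R / a_ch"
    using rr_counter_le_bound[OF run3, of 2 "sum c R" T h] T alphas_pos c_nonneg R(2)
    by (simp add: sum_nonneg subset_iff)
  moreover have "strat_cost c OPT x = sum c R"
    using R(1) by (simp add: strat_cost_def R_def sum_list_distinct_conv_sum_set)
  ultimately show ?thesis using sum_rr_step_cost[OF T] by (simp add: T_def D_def)
qed

end
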